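(* Let $p$ be a prime with $p\equiv 1\pmod 4$, let $a$ be a generator of $\mathbb{F}_p^*$, let $k=\frac{p-1}{4}$, $\theta=\exp\!\left(\frac{2\pi i}{p-1}\right)$ and $\eta=\exp\!\left(\frac{2\pi i}{p}\right)$. For $0\le x<p$ define $\varphi_x\in\mathcal{H}=\mathbb{C}(\mathbb{F}_p)$ by $$\varphi_x(n)=\begin{cases}\dfrac{1}{\sqrt{p}}\,\eta^{2^{-1}a^k n^2}, & x=0,\\[2mm] \dfrac{1}{\sqrt{p(p-1)}}\displaystyle\sum_{j=1}^{p-1}\theta^{x\log_a j}\,\eta^{a^k(j-n)^2-2^{-1}a^k n^2}, & 0<x<p,\end{cases}\qquad n\in\mathbb{F}_p.$$ Then $\Phi_p=\{\varphi_x:0\le x<p\}$ is an orthonormal basis of $\mathcal{H}$ and each $\varphi_x$ is an eigenvector of the discrete Fourier transform $F$.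
   Context: $\mathcal{H}=\mathbb{C}(\mathbb{F}_p)$ is the Hilbert space of functions $\mathbb{F}_p\to\mathbb{C}$ with the standard inner product $\langle\varphi,\psi\rangle=\sum_{n\in\mathbb{F}_p}\varphi(n)\overline{\psi(n)}$. The discrete Fourier transform is the operator $F[\varphi](m)=\frac{1}{\sqrt{p}}\sum_{n\in\mathbb{F}_p}\eta^{mn}\varphi(n)$. Exponents of $\eta$ are computed in $\mathbb{F}_p$ (with $2^{-1}$ the inverse of $2$ in $\mathbb{F}_p$ and $a^k\in\mathbb{F}_p$); for $j\in\mathbb{F}_p^*$, $\log_a j$ is the unique $m\in\{0,\dots,p-2\}$ with $a^m=j$. *)

theory Defs
  imports "HOL-Analysis.Analysis" "HOL-Number_Theory.Number_Theory"
begin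

text \<open>Elements of F_p are represented by naturals 0..p-1; functions F_p -> C by
  functions nat => complex, only their values on {..<p} matter.\<close>

definition eta_pow :: "nat \<Rightarrow> int \<Rightarrow> complex" where
  "eta_pow p e = exp (2 * of_real pi * \<i> * of_int (e mod int p) / of_nat p)"

definition theta_pow :: "nat \<Rightarrow> nat \<Rightarrow> complex" where
  "theta_pow p e = exp (2 * of_real pi * \<i> * of_nat e / of_nat (p - 1))"

definition inv2 :: "nat \<Rightarrow> int" where
  "inv2 p = (THE t. 0 \<le> t \<and> t < int p \<and> (2 * t) mod int p = 1)"

definition dlog :: "nat \<Rightarrow> nat \<Rightarrow> nat \<Rightarrow> nat" where
  "dlog p a j = (THE m. m \<le> p - 2 \<and> a ^ m mod p = j mod p)"

definition phi :: "nat \<Rightarrow> nat \<Rightarrow> nat \<Rightarrow> nat \<Rightarrow> complex" where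
  "phi p a x n =
    (let k = (p - 1) div 4; c = int (a ^ k mod p) in
     if x = 0 then
       1 / of_real (sqrt (real p)) * eta_pow p (inv2 p * c * int n ^ 2)
     else
       1 / of_real (sqrt (real p * real (p - 1))) *
         (\<Sum>j = 1..p - 1. theta_pow p (x * dlog p a j) *
            eta_pow p (c * (int j - int n) ^ 2 - inv2 p * c * int n ^ 2)))"

definition DFT :: "nat \<Rightarrow> (nat \<Rightarrow> complex) \<Rightarrow> nat \<Rightarrow> complex" where
  "DFT p f m = 1 / of_real (sqrt (real p)) * (\<Sum>n<p. eta_pow p (int m * int n) * f n)"

definition inner_Fp :: "nat \<Rightarrow> (nat \<Rightarrow> complex) \<Rightarrow> (nat \<Rightarrow> complex) \<Rightarrow> complex" where
  "inner_Fp p f g = (\<Sum>n<p. f n * cnj (g n))"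

end

theory Submission
  imports Defs "Jordan_Normal_Form.Determinant"
begin

text \<open>
  Write \<open>c = a^k\<close>, so that \<open>c\<^sup>2 \<equiv> -1 (mod p)\<close>, and \<open>h = 2\<^sup>-\<^sup>1\<close>. The chirps
  \<open>\<psi>\<^sub>j(n) = \<eta>^(c(j-n)\<^sup>2 - hcn\<^sup>2)\<close>, \<open>j \<in> \<bbbF>\<^sub>p\<close>, are orthogonal of norm \<open>\<surd>p\<close>, and completing
  the square (using \<open>c\<^sup>2 = -1\<close>) shows \<open>F \<psi>\<^sub>j = (G/\<surd>p) \<psi>\<^sub>c\<^sub>j\<close> with the quadratic Gauss sum
  \<open>G = \<Sigma>\<^sub>n \<eta>^(hcn\<^sup>2)\<close>. Now \<open>\<phi>\<^sub>0\<close> is a multiple of \<open>\<psi>\<^sub>0\<close>, and for \<open>x > 0\<close> the vector \<open>\<phi>\<^sub>x\<close> has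
  coefficients \<open>\<chi>\<^sub>x(j)/\<surd>(p(p-1))\<close> in the chirp basis, where \<open>\<chi>\<^sub>x(j) = \<theta>^(x log\<^sub>a j)\<close> are the
  multiplicative characters of \<open>\<bbbF>\<^sub>p\<^sup>*\<close>. Orthogonality of characters gives orthonormality of
  the \<open>\<phi>\<^sub>x\<close>, and since \<open>j \<mapsto> cj\<close> permutes \<open>\<bbbF>\<^sub>p\<^sup>*\<close>, multiplicativity of \<open>\<chi>\<^sub>x\<close> turns
  \<open>F \<phi>\<^sub>x\<close> into \<open>(G/\<surd>p) \<chi>\<^sub>x(c)\<^sup>-\<^sup>1 \<phi>\<^sub>x\<close>. Completeness follows from orthonormality, as there are \<open>p\<close> of them.
\<close>

definition unit_root :: "nat \<Rightarrow> int \<Rightarrow> complex" where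
  "unit_root N t = exp (2 * of_real pi * \<i> * of_int t / of_nat N)"

lemma unit_root_0 [simp]: "unit_root N 0 = 1"
  unfolding unit_root_def by simp

lemma unit_root_add: "unit_root N (s + t) = unit_root N s * unit_root N t"
  unfolding unit_root_def by (simp add: distrib_left add_divide_distrib exp_add)

lemma unit_root_power: "unit_root N t ^ i = unit_root N (t * int i)"
  by (induction i) (simp_all add: unit_root_add[symmetric] algebra_simps)

lemma cnj_unit_root: "cnj (unit_root N t) = unit_root N (- t)"
  unfolding unit_root_def exp_cnj by simp

lemma unit_root_multiple: "N > 0 \<Longrightarrow> unit_root N (int N * q) = 1"
  unfolding unit_root_def using exp_integer_2pi[of "of_int q"] by (simp add: mult_ac)

lemma unit_root_cong: "N > 0 \<Longrightarrow> [s = t] (mod int N) \<Longrightarrow> unit_root N s = unit_root N t"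
  by (metis cong_iff_dvd_diff dvdE unit_root_add unit_root_multiple
      add_diff_cancel_left' diff_add_cancel mult_1_right)

lemma unit_root_eq_1_iff:
  assumes "N > 0" shows "unit_root N t = 1 \<longleftrightarrow> int N dvd t"
proof
  assume "unit_root N t = 1"
  then have "exp (complex_of_real (2 * pi * of_int t / of_nat N) * \<i>) = 1"
    unfolding unit_root_def by (simp add: mult_ac)
  then obtain n :: int where "2 * pi * of_int t / of_nat N = of_int (2 * n) * pi"
    unfolding exp_eq_1 by auto
  then have "of_int t = (of_int (n * int N) :: real)"
    using assms pi_gt_zero by (simp add: field_simps)
  then show "int N dvd t" by (metis dvd_triv_right of_int_eq_iff)
qed (use assms unit_root_multiple in auto)

lemma sum_unit_root_powers:
  assumes "N > 0"
  shows "(\<Sum>i<N. unit_root N (t * int i)) = (if int N dvd t then of_nat N else 0)"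
proof (cases "int N dvd t")
  case True
  then have "unit_root N (t * int i) = 1" for i
    using unit_root_eq_1_iff[OF assms] by (simp add: dvd_mult2)
  then show ?thesis using True by simp
next
  case False
  then have ne: "unit_root N t \<noteq> 1" using unit_root_eq_1_iff[OF assms] by simp
  have "(\<Sum>i<N. unit_root N (t * int i)) = (unit_root N t ^ N - 1) / (unit_root N t - 1)"
    unfolding unit_root_power[symmetric] by (rule geometric_sum[OF ne])
  also have "unit_root N t ^ N = 1" by (simp add: unit_root_power unit_root_eq_1_iff[OF assms])
  finally show ?thesis using False by simp
qed

lemma eta_pow_eq_unit_root: "p > 0 \<Longrightarrow> eta_pow p t = unit_root p t"
  unfolding eta_pow_def unit_root_def[symmetric] by (rule unit_root_cong) (simp_all add: cong_def)

lemma theta_pow_eq_unit_root: "theta_pow p e = unit_root (p - 1) (int e)"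
  unfolding theta_pow_def unit_root_def by simp

lemma sum_lessThan_shift_mod:
  fixes F :: "int \<Rightarrow> 'a::comm_monoid_add"
  assumes p: "p > 0" and periodic: "\<And>x. F (x mod int p) = F x"
  shows "(\<Sum>n<p. F (int n - s)) = (\<Sum>n<p. F (int n))"
proof -
  define g where "g n = nat ((int n - s) mod int p)" for n
  have bij: "bij_betw g {..<p} {..<p}"
  proof (rule bij_betw_byWitness[where f' = "\<lambda>n. nat ((int n + s) mod int p)"])
    show "\<forall>n\<in>{..<p}. nat ((int (g n) + s) mod int p) = n"
      using p by (auto simp: g_def mod_add_left_eq nat_mod_as_int)
    show "\<forall>n\<in>{..<p}. g (nat ((int n + s) mod int p)) = n"
      using p by (auto simp: g_def mod_diff_left_eq nat_mod_as_int)
  qed (use p in \<open>auto simp: g_def nat_less_iff\<close>)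
  have "(\<Sum>n<p. F (int n - s)) = (\<Sum>n<p. F (int (g n)))"
    using p periodic by (intro sum.cong) (simp_all add: g_def)
  also have "\<dots> = (\<Sum>n<p. F (int n))" by (rule sum.reindex_bij_betw[OF bij])
  finally show ?thesis .
qed

lemma orthonormal_square_dual:
  fixes u :: "nat \<Rightarrow> nat \<Rightarrow> complex"
  assumes orth: "\<And>x y. x < N \<Longrightarrow> y < N \<Longrightarrow> (\<Sum>n<N. u x n * cnj (u y n)) = (if x = y then 1 else 0)"
    and "n < N" "m < N"
  shows "(\<Sum>x<N. cnj (u x n) * u x m) = (if n = m then 1 else 0)"
proof -
  define A :: "complex mat" where "A = Matrix.mat N N (\<lambda>(x, n). u x n)"
  define B :: "complex mat" where "B = Matrix.mat N N (\<lambda>(n, x). cnj (u x n))"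
  have A: "A \<in> carrier_mat N N" and B: "B \<in> carrier_mat N N"
    by (simp_all add: A_def B_def)
  have "A * B = 1\<^sub>m N"
    using orth by (intro eq_matI) (auto simp: A_def B_def scalar_prod_def atLeast0LessThan)
  then have "B * A = 1\<^sub>m N"
    by (rule mat_mult_left_right_inverse[OF A B])
  then show ?thesis
    using assms(2,3)
    by (auto simp: A_def B_def scalar_prod_def atLeast0LessThan
        dest: arg_cong[where f = "\<lambda>M. M $$ (n, m)"])
qed

lemma orthonormal_expansion:
  assumes orth: "\<And>x y. x < N \<Longrightarrow> y < N \<Longrightarrow> inner_Fp N (u x) (u y) = (if x = y then 1 else 0)"
    and "m < N"
  shows "f m = (\<Sum>x<N. inner_Fp N f (u x) * u x m)"
proof -
  have dual: "(\<Sum>x<N. cnj (u x n) * u x m) = (if n = m then 1 else 0)" if "n < N" for n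
    using orth unfolding inner_Fp_def by (rule orthonormal_square_dual[OF _ that \<open>m < N\<close>])
  have "(\<Sum>x<N. inner_Fp N f (u x) * u x m) = (\<Sum>x<N. \<Sum>n<N. f n * (cnj (u x n) * u x m))"
    unfolding inner_Fp_def by (simp add: sum_distrib_right mult.assoc)
  also have "\<dots> = (\<Sum>n<N. f n * (\<Sum>x<N. cnj (u x n) * u x m))"
    by (subst sum.swap) (simp add: sum_distrib_left)
  also have "\<dots> = f m"
    using \<open>m < N\<close> by (simp add: dual if_distrib cong: if_cong)
  finally show ?thesis ..
qed

lemma inv2_eq:
  assumes "odd p" "p > 1" shows "inv2 p = (int p + 1) div 2"
  unfolding inv2_def
proof (rule the_equality)
  let ?t = "(int p + 1) div 2"
  have t: "2 * ?t = int p + 1" using assms(1) by presburger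
  then have "2 * ?t mod int p = 1 mod int p" by simp
  then have t_mod: "2 * ?t mod int p = 1" using assms by simp
  then show "0 \<le> ?t \<and> ?t < int p \<and> 2 * ?t mod int p = 1" using assms t by auto
  fix t assume "0 \<le> t \<and> t < int p \<and> 2 * t mod int p = 1"
  moreover have "coprime 2 (int p)" using assms(1) by simp
  ultimately have "[t = ?t] (mod int p)"
    using t_mod cong_mult_lcancel[of 2 "int p" t ?t] by (simp add: cong_def)
  moreover have "int p \<ge> 3" using assms by presburger
  ultimately show "t = ?t" using \<open>0 \<le> t \<and> t < int p \<and> _\<close>
    by (intro cong_less_imp_eq_int) auto
qed

lemma of_real_sqrt_mult_self:
  "0 \<le> s \<Longrightarrow> of_real (sqrt s) * of_real (sqrt s) = (of_real s :: 'a::real_algebra_1)"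
  by (simp flip: of_real_mult)

locale chirp_basis =
  fixes p :: nat and c h :: int
  assumes prime: "prime p"
    and c_square: "[c ^ 2 = - 1] (mod int p)"
    and two_h: "[2 * h = 1] (mod int p)"
begin

lemma p_gt_1: "p > 1"
  using prime prime_gt_1_nat by blast

lemma cong_by_relations:
  assumes "X - Y = (2 * h - 1) * P + (c ^ 2 + 1) * Q"
  shows "[X = Y] (mod int p)"
proof -
  have "int p dvd 2 * h - 1" "int p dvd c ^ 2 + 1"
    using two_h c_square by (simp_all add: cong_iff_dvd_diff)
  then show ?thesis unfolding cong_iff_dvd_diff assms by (simp add: dvd_add dvd_mult2)
qed

lemma dvd_2c_mult_iff: "int p dvd 2 * c * t \<longleftrightarrow> int p dvd t"
proof -
  have "\<not> int p dvd 2"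
  proof
    assume "int p dvd 2"
    then have "[2 * h = 0] (mod int p)" by (simp add: cong_0_iff)
    with two_h have "int p dvd 1" by (metis cong_0_iff cong_sym cong_trans)
    then show False using p_gt_1 by simp
  qed
  moreover have "\<not> int p dvd c"
  proof
    assume "int p dvd c"
    then have "[c ^ 2 = 0] (mod int p)" by (simp add: cong_0_iff power2_eq_square)
    with c_square have "int p dvd 1" by (metis cong_0_iff cong_sym cong_trans dvd_minus_iff)
    then show False using p_gt_1 by simp
  qed
  ultimately show ?thesis
    using prime by (simp add: prime_dvd_mult_iff)
qed

definition chirp :: "nat \<Rightarrow> nat \<Rightarrow> complex" where
  "chirp j n = unit_root p (c * (int j - int n) ^ 2 - h * c * int n ^ 2)"

definition gauss_sum :: complex where
  "gauss_sum = (\<Sum>n<p. unit_root p (h * c * int n ^ 2))"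

lemma chirp_cong:
  assumes "[int j = J] (mod int p)"
  shows "chirp j m = unit_root p (c * (J - int m) ^ 2 - h * c * int m ^ 2)"
  unfolding chirp_def using p_gt_1
  by (intro unit_root_cong cong_diff[OF cong_scalar_left[OF cong_pow[OF cong_diff[OF assms cong_refl]]]])
    simp_all

lemma chirp_0: "chirp 0 n = unit_root p (h * c * int n ^ 2)"
  unfolding chirp_def using p_gt_1
  by (intro unit_root_cong cong_by_relations[where P = "- c * int n ^ 2" and Q = 0])
    (simp_all add: algebra_simps power2_eq_square)

lemma chirp_orthogonal:
  assumes "j < p" "l < p"
  shows "(\<Sum>n<p. chirp j n * cnj (chirp l n)) = (if j = l then of_nat p else 0)"
proof -
  have dvd_iff: "int p dvd - 2 * c * (int j - int l) \<longleftrightarrow> j = l"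
  proof -
    have "int p dvd - 2 * c * (int j - int l) \<longleftrightarrow> [int j = int l] (mod int p)"
      using dvd_2c_mult_iff[of "int j - int l"] by (simp add: cong_iff_dvd_diff dvd_diff_commute)
    also have "\<dots> \<longleftrightarrow> j = l"
      using assms by (metis cong_int_iff cong_less_imp_eq_nat cong_refl zero_le)
    finally show ?thesis .
  qed
  have "chirp j n * cnj (chirp l n) =
      unit_root p (c * (int j ^ 2 - int l ^ 2)) * unit_root p (- 2 * c * (int j - int l) * int n)" for n
    unfolding chirp_def cnj_unit_root unit_root_add[symmetric]
    by (simp add: algebra_simps power2_eq_square)
  then have "(\<Sum>n<p. chirp j n * cnj (chirp l n)) =
      unit_root p (c * (int j ^ 2 - int l ^ 2)) * (\<Sum>n<p. unit_root p (- 2 * c * (int j - int l) * int n))"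
    by (simp add: sum_distrib_left)
  also have "\<dots> = unit_root p (c * (int j ^ 2 - int l ^ 2)) *
      (if int p dvd - 2 * c * (int j - int l) then of_nat p else 0)"
    using sum_unit_root_powers[of p "- 2 * c * (int j - int l)"] p_gt_1 by simp
  also have "\<dots> = (if j = l then of_nat p else 0)"
    unfolding dvd_iff by simp
  finally show ?thesis .
qed

definition mul_c :: "nat \<Rightarrow> nat" where
  "mul_c j = nat ((c * int j) mod int p)"

definition mul_neg_c :: "nat \<Rightarrow> nat" where
  "mul_neg_c j = nat ((- c * int j) mod int p)"

lemma int_mul_c: "int (mul_c j) = (c * int j) mod int p"
  unfolding mul_c_def using p_gt_1 by simp

lemma int_mul_neg_c: "int (mul_neg_c j) = (- c * int j) mod int p"
  unfolding mul_neg_c_def using p_gt_1 by simp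

lemma mul_c_less: "mul_c j < p"
  unfolding mul_c_def using p_gt_1 by (simp add: nat_less_iff)

lemma mul_neg_c_less: "mul_neg_c j < p"
  unfolding mul_neg_c_def using p_gt_1 by (simp add: nat_less_iff)

lemma mul_neg_c_mul_c: "j < p \<Longrightarrow> mul_neg_c (mul_c j) = j"
proof -
  assume "j < p"
  have "int (mul_neg_c (mul_c j)) = (- c * ((c * int j) mod int p)) mod int p"
    by (simp only: int_mul_neg_c int_mul_c)
  also have "\<dots> = (- c * (c * int j)) mod int p"
    by (rule mod_mult_right_eq)
  also have "\<dots> = int j mod int p"
    using cong_by_relations[where X = "- c * (c * int j)" and Y = "int j" and P = 0 and Q = "- int j"]
    by (simp add: cong_def algebra_simps power2_eq_square)
  finally show ?thesis using \<open>j < p\<close> by simp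
qed

lemma mul_c_mul_neg_c: "l < p \<Longrightarrow> mul_c (mul_neg_c l) = l"
proof -
  assume "l < p"
  have "int (mul_c (mul_neg_c l)) = (c * ((- c * int l) mod int p)) mod int p"
    by (simp only: int_mul_neg_c int_mul_c)
  also have "\<dots> = (c * (- c * int l)) mod int p"
    by (rule mod_mult_right_eq)
  also have "\<dots> = int l mod int p"
    using cong_by_relations[where X = "c * (- c * int l)" and Y = "int l" and P = 0 and Q = "- int l"]
    by (simp add: cong_def algebra_simps power2_eq_square)
  finally show ?thesis using \<open>l < p\<close> by simp
qed

lemma bij_betw_mul_c: "bij_betw mul_c {..<p} {..<p}"
  by (rule bij_betw_byWitness[where f' = mul_neg_c])
    (auto simp: mul_neg_c_mul_c mul_c_mul_neg_c mul_c_less mul_neg_c_less)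

lemma DFT_kernel_chirp:
  "(\<Sum>n<p. unit_root p (int m * int n) * chirp j n) = gauss_sum * chirp (mul_c j) m"
proof -
  define s where "s = c * (int m - 2 * c * int j)"
  define K where "K = unit_root p (c * (c * int j - int m) ^ 2 - h * c * int m ^ 2)"
  have square: "unit_root p (int m * int n) * chirp j n = unit_root p (h * c * (int n - s) ^ 2) * K" for n
  proof -
    let ?M = "int m" and ?N = "int n" and ?J = "int j"
    have "unit_root p (int m * int n) * chirp j n =
        unit_root p (?M * ?N + (c * (?J - ?N) ^ 2 - h * c * ?N ^ 2))"
      unfolding chirp_def unit_root_add ..
    also have "\<dots> = unit_root p (h * c * (?N - s) ^ 2 + (c * (c * ?J - ?M) ^ 2 - h * c * ?M ^ 2))"
    proof (rule unit_root_cong)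
      \<comment> \<open>completing the square: both exponents agree modulo the relations \<open>2h = 1\<close>, \<open>c\<^sup>2 = -1\<close>\<close>
      show "[?M * ?N + (c * (?J - ?N)\<^sup>2 - h * c * ?N\<^sup>2) =
          h * c * (?N - s)\<^sup>2 + (c * (c * ?J - ?M)\<^sup>2 - h * c * ?M\<^sup>2)] (mod int p)"
        by (rule cong_by_relations[where
              P = "- c*?N^2 + c*?M^2 - ?M*?N + 2*c*?N*?J + 2*?M*?J - 2*c*?J^2" and
              Q = "2*h*?M*?N - 4*h*c*?N*?J - h*c*?M^2 + 4*h*c^2*?M*?J - 4*h*c^3*?J^2
                   - c*?J^2 + 2*?M*?J - 4*h*?M*?J + 4*h*c*?J^2"])
          (simp add: s_def algebra_simps power2_eq_square power3_eq_cube)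
    qed (use p_gt_1 in simp)
    also have "\<dots> = unit_root p (h * c * (int n - s) ^ 2) * K"
      unfolding K_def unit_root_add ..
    finally show ?thesis .
  qed
  have "(\<Sum>n<p. unit_root p (int m * int n) * chirp j n) =
      (\<Sum>n<p. unit_root p (h * c * (int n - s) ^ 2)) * K"
    by (simp add: square sum_distrib_right)
  also have "(\<Sum>n<p. unit_root p (h * c * (int n - s) ^ 2)) = gauss_sum"
    unfolding gauss_sum_def using p_gt_1
    by (intro sum_lessThan_shift_mod unit_root_cong cong_scalar_left cong_pow) (simp_all add: cong_def)
  also have "K = chirp (mul_c j) m"
    unfolding K_def by (rule chirp_cong[symmetric]) (simp add: int_mul_c cong_def)
  finally show ?thesis .
qed

lemma inner_chirp_combination:
  "inner_Fp p (\<lambda>n. \<Sum>j<p. v j * chirp j n) (\<lambda>n. \<Sum>l<p. w l * chirp l n) =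
    of_nat p * (\<Sum>j<p. v j * cnj (w j))"
proof -
  have "inner_Fp p (\<lambda>n. \<Sum>j<p. v j * chirp j n) (\<lambda>n. \<Sum>l<p. w l * chirp l n) =
      (\<Sum>n<p. \<Sum>j<p. \<Sum>l<p. v j * cnj (w l) * (chirp j n * cnj (chirp l n)))"
    unfolding inner_Fp_def cnj_sum sum_product complex_cnj_mult by (simp add: mult_ac)
  also have "\<dots> = (\<Sum>j<p. \<Sum>n<p. \<Sum>l<p. v j * cnj (w l) * (chirp j n * cnj (chirp l n)))"
    by (rule sum.swap)
  also have "\<dots> = (\<Sum>j<p. \<Sum>l<p. \<Sum>n<p. v j * cnj (w l) * (chirp j n * cnj (chirp l n)))"
    by (rule sum.cong[OF refl], rule sum.swap)
  also have "\<dots> = (\<Sum>j<p. \<Sum>l<p. v j * cnj (w l) * (\<Sum>n<p. chirp j n * cnj (chirp l n)))"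
    by (simp add: sum_distrib_left)
  also have "\<dots> = (\<Sum>j<p. v j * cnj (w j) * of_nat p)"
    by (simp add: chirp_orthogonal if_distrib cong: if_cong)
  finally show ?thesis by (simp add: sum_distrib_left mult_ac)
qed

lemma DFT_chirp_combination:
  "DFT p (\<lambda>n. \<Sum>j<p. v j * chirp j n) m =
    gauss_sum / of_real (sqrt (real p)) * (\<Sum>l<p. v (mul_neg_c l) * chirp l m)"
proof -
  have "(\<Sum>n<p. unit_root p (int m * int n) * (\<Sum>j<p. v j * chirp j n)) =
      (\<Sum>n<p. \<Sum>j<p. v j * (unit_root p (int m * int n) * chirp j n))"
    by (simp add: sum_distrib_left mult_ac)
  also have "\<dots> = (\<Sum>j<p. v j * (\<Sum>n<p. unit_root p (int m * int n) * chirp j n))"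
    by (subst sum.swap) (simp add: sum_distrib_left)
  also have "\<dots> = (\<Sum>j<p. v j * (gauss_sum * chirp (mul_c j) m))"
    by (simp add: DFT_kernel_chirp)
  also have "\<dots> = gauss_sum * (\<Sum>j<p. v (mul_neg_c (mul_c j)) * chirp (mul_c j) m)"
    by (simp add: mul_neg_c_mul_c sum_distrib_left mult_ac)
  also have "(\<Sum>j<p. v (mul_neg_c (mul_c j)) * chirp (mul_c j) m) = (\<Sum>l<p. v (mul_neg_c l) * chirp l m)"
    by (rule sum.reindex_bij_betw[OF bij_betw_mul_c])
  finally show ?thesis
    unfolding DFT_def eta_pow_eq_unit_root[OF prime_gt_0_nat[OF prime]] by simp
qed

end

locale primroot_chars =
  fixes p a :: nat
  assumes prime: "prime p" and primroot: "residue_primroot p a"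
begin

lemma p_gt_1: "p > 1"
  using prime prime_gt_1_nat by blast

lemma ord_eq: "ord p a = p - 1"
  using primroot prime by (simp add: residue_primroot_def totient_prime)

lemma bij_betw_powers: "bij_betw (\<lambda>i. a ^ i mod p) {..<p - 1} {0<..<p}"
  using residue_primroot_is_generator[OF p_gt_1 primroot] prime
  by (simp add: totient_prime totatives_prime)

lemma dlog_power:
  assumes "i < p - 1" shows "dlog p a (a ^ i mod p) = i"
  unfolding dlog_def
proof (rule the_equality)
  show "i \<le> p - 2 \<and> a ^ i mod p = a ^ i mod p mod p" using assms by simp
  fix m assume m: "m \<le> p - 2 \<and> a ^ m mod p = a ^ i mod p mod p"
  then have "m \<in> {..<p - 1}" "i \<in> {..<p - 1}" "a ^ m mod p = a ^ i mod p"
    using assms p_gt_1 by auto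
  then show "m = i" using inj_onD[OF bij_betw_imp_inj_on[OF bij_betw_powers]] by blast
qed

lemma power_dlog:
  assumes "0 < j" "j < p"
  shows "a ^ dlog p a j mod p = j"
proof -
  have "j \<in> (\<lambda>i. a ^ i mod p) ` {..<p - 1}"
    using bij_betw_imp_surj_on[OF bij_betw_powers] assms by simp
  then obtain i where "i < p - 1" "a ^ i mod p = j" by auto
  then show ?thesis using dlog_power by metis
qed

lemma power_half_order_cong:
  assumes "p > 2" shows "[int (a ^ ((p - 1) div 2)) = - 1] (mod int p)"
proof -
  let ?b = "a ^ ((p - 1) div 2)"
  have "odd p" using prime assms prime_odd_nat by blast
  then have "p - 1 = (p - 1) div 2 + (p - 1) div 2" by presburger
  then have "a ^ (p - 1) = ?b * ?b" by (metis power_add)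
  moreover have "[a ^ (p - 1) = 1] (mod p)"
    using ord[of a p] ord_eq primroot by (simp add: residue_primroot_def coprime_commute)
  ultimately have "[int ?b * int ?b = 1] (mod int p)"
    by (metis cong_int_iff of_nat_1 of_nat_mult)
  then have "int p dvd (int ?b - 1) * (int ?b + 1)"
    by (simp add: cong_iff_dvd_diff dvd_diff_commute algebra_simps)
  then have "int p dvd int ?b - 1 \<or> int p dvd int ?b + 1"
    using prime by (simp add: prime_dvd_mult_iff)
  moreover have "\<not> [?b = 1] (mod p)"
  proof
    assume "[?b = 1] (mod p)"
    then have "p - 1 dvd (p - 1) div 2" using ord_divides' ord_eq by simp
    moreover have "0 < (p - 1) div 2" "(p - 1) div 2 < p - 1" using assms by auto
    ultimately show False using dvd_imp_le[of "p - 1" "(p - 1) div 2"] by linarith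
  qed
  then have "\<not> int p dvd int ?b - 1"
    by (metis cong_iff_dvd_diff cong_int_iff of_nat_1)
  ultimately show ?thesis by (simp add: cong_iff_dvd_diff)
qed

definition character :: "nat \<Rightarrow> nat \<Rightarrow> complex" where
  "character x j = theta_pow p (x * dlog p a j)"

lemma character_orthogonal:
  assumes "0 < x" "x < p" "0 < y" "y < p"
  shows "(\<Sum>j\<in>{0<..<p}. character x j * cnj (character y j)) = (if x = y then of_nat (p - 1) else 0)"
proof -
  have "(\<Sum>j\<in>{0<..<p}. character x j * cnj (character y j)) =
      (\<Sum>i<p - 1. character x (a ^ i mod p) * cnj (character y (a ^ i mod p)))"
    by (rule sum.reindex_bij_betw[OF bij_betw_powers, symmetric])
  also have "\<dots> = (\<Sum>i<p - 1. unit_root (p - 1) ((int x - int y) * int i))"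
    by (intro sum.cong refl)
      (simp add: character_def theta_pow_eq_unit_root dlog_power cnj_unit_root
        flip: unit_root_add, simp add: algebra_simps)
  also have "\<dots> = (if int (p - 1) dvd int x - int y then of_nat (p - 1) else 0)"
    using p_gt_1 by (intro sum_unit_root_powers) simp
  also have "int (p - 1) dvd int x - int y \<longleftrightarrow> x = y"
  proof
    assume "int (p - 1) dvd int x - int y"
    then have "[int x - 1 = int y - 1] (mod int (p - 1))" by (simp add: cong_iff_dvd_diff)
    then have "int x - 1 = int y - 1" using assms by (intro cong_less_imp_eq_int) auto
    then show "x = y" by simp
  qed simp
  finally show ?thesis .
qed

lemma character_mult:
  assumes "0 < j" "j < p" "0 < l" "l < p" "0 < m" "m < p" "[m = j * l] (mod p)"
  shows "character x m = character x j * character x l"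
proof -
  have "[a ^ dlog p a j * a ^ dlog p a l = j * l] (mod p)"
    using assms power_dlog[of j] power_dlog[of l] by (intro cong_mult) (simp_all add: cong_def)
  moreover have "[a ^ dlog p a m = m] (mod p)"
    using assms power_dlog[of m] by (simp add: cong_def)
  ultimately have "[a ^ dlog p a m = a ^ (dlog p a j + dlog p a l)] (mod p)"
    using assms(7) unfolding power_add by (meson cong_sym cong_trans)
  then have "[dlog p a m = dlog p a j + dlog p a l] (mod (p - 1))"
    using order_divides_expdiff primroot ord_eq by (simp add: residue_primroot_def)
  then have "[int x * int (dlog p a m) = int x * int (dlog p a j) + int x * int (dlog p a l)] (mod int (p - 1))"
    by (metis cong_int_iff cong_scalar_left distrib_left of_nat_add)
  then show ?thesis
    using p_gt_1 unit_root_cong[of "p - 1"]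
    by (simp add: character_def theta_pow_eq_unit_root unit_root_add[symmetric])
qed

end

locale phi_basis = primroot_chars p a for p a +
  fixes c h :: int
  assumes p_mod_4: "p mod 4 = 1"
    and c_def: "c = int (a ^ ((p - 1) div 4) mod p)"
    and h_def: "h = inv2 p"
begin

lemma c_square: "[c ^ 2 = - 1] (mod int p)"
proof -
  have "[c ^ 2 = int (a ^ ((p - 1) div 4)) ^ 2] (mod int p)"
    unfolding c_def by (intro cong_pow) (simp add: cong_def of_nat_mod)
  also have "int (a ^ ((p - 1) div 4)) ^ 2 = int (a ^ ((p - 1) div 2))"
  proof -
    have "(p - 1) div 4 * 2 = (p - 1) div 2" using p_mod_4 by presburger
    then show ?thesis by (metis of_nat_power power_mult)
  qed
  also have "[\<dots> = - 1] (mod int p)"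
    using p_mod_4 p_gt_1 by (intro power_half_order_cong) presburger
  finally show ?thesis .
qed

lemma two_h: "[2 * h = 1] (mod int p)"
proof -
  have "odd p" using p_mod_4 by presburger
  then have "2 * h = int p + 1" using inv2_eq p_gt_1 h_def by presburger
  then show ?thesis by (simp add: cong_def)
qed

end

sublocale phi_basis \<subseteq> chirp_basis p c h
  using prime c_square two_h by unfold_locales

context phi_basis
begin

definition coeff :: "nat \<Rightarrow> nat \<Rightarrow> complex" where
  "coeff x j =
    (if j = 0 then (if x = 0 then 1 / of_real (sqrt (real p)) else 0)
     else if x = 0 then 0 else character x j / of_real (sqrt (real p * real (p - 1))))"

lemma sum_lessThan_p: "(\<Sum>j<p. f j) = f 0 + (\<Sum>j\<in>{0<..<p}. f j)"
proof -
  have "{..<p} = insert 0 {0<..<p}" using p_gt_1 by auto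
  then show ?thesis by simp
qed

lemma phi_eq_chirp_combination: "phi p a x = (\<lambda>n. \<Sum>j<p. coeff x j * chirp j n)"
proof
  fix n
  have range: "{1..p - 1} = {0<..<p}" by auto
  have eta: "eta_pow p = unit_root p"
    using p_gt_1 by (auto simp: eta_pow_eq_unit_root)
  note phi_unfolded = phi_def Let_def c_def[symmetric] h_def[symmetric] eta range
  show "phi p a x n = (\<Sum>j<p. coeff x j * chirp j n)"
  proof (cases "x = 0")
    case True
    then show ?thesis
      unfolding phi_unfolded by (subst sum_lessThan_p) (simp add: coeff_def chirp_0)
  next
    case False
    then show ?thesis
      unfolding phi_unfolded
      by (subst sum_lessThan_p) (simp add: coeff_def character_def chirp_def sum_divide_distrib)
  qed
qed

lemma coeff_orthonormal:
  assumes "x < p" "y < p"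
  shows "of_nat p * (\<Sum>j<p. coeff x j * cnj (coeff y j)) = (if x = y then 1 else 0)"
proof -
  have "(\<Sum>j<p. coeff x j * cnj (coeff y j)) =
      (if x = 0 \<and> y = 0 then 1 / of_nat p
       else if x = 0 \<or> y = 0 then 0
       else (\<Sum>j\<in>{0<..<p}. character x j * cnj (character y j)) / (of_nat p * of_nat (p - 1)))"
    using p_gt_1
    by (subst sum_lessThan_p) (simp add: coeff_def of_real_sqrt_mult_self of_nat_diff sum_divide_distrib)
  then show ?thesis
    using assms p_gt_1 character_orthogonal[of x y] by auto
qed

definition twist :: "nat \<Rightarrow> complex" where
  "twist x = (if x = 0 then 1 else character x (mul_neg_c 1))"

lemma mul_neg_c_pos:
  assumes "0 < l" "l < p" shows "0 < mul_neg_c l"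
proof (rule ccontr)
  assume "\<not> 0 < mul_neg_c l"
  then have "mul_c (mul_neg_c l) = 0" by (simp add: mul_c_def)
  with mul_c_mul_neg_c[OF assms(2)] assms(1) show False by simp
qed

lemma coeff_mul_neg_c:
  assumes "l < p" shows "coeff x (mul_neg_c l) = twist x * coeff x l"
proof (cases "l = 0")
  case True
  then show ?thesis by (simp add: mul_neg_c_def coeff_def twist_def)
next
  case False
  have "[int (mul_neg_c l) = int (mul_neg_c 1) * int l] (mod int p)"
    by (simp add: int_mul_neg_c cong_def mod_mult_left_eq)
  then have "[mul_neg_c l = mul_neg_c 1 * l] (mod p)"
    by (metis cong_int_iff of_nat_mult)
  then have "character x (mul_neg_c l) = character x (mul_neg_c 1) * character x l"
    using False assms p_gt_1 by (intro character_mult) (auto intro: mul_neg_c_pos mul_neg_c_less)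
  then show ?thesis
    using False assms mul_neg_c_pos[of l] by (simp add: coeff_def twist_def)
qed

lemma phi_orthonormal:
  "x < p \<Longrightarrow> y < p \<Longrightarrow> inner_Fp p (phi p a x) (phi p a y) = (if x = y then 1 else 0)"
  unfolding phi_eq_chirp_combination inner_chirp_combination by (rule coeff_orthonormal)

lemma DFT_phi:
  "DFT p (phi p a x) m = gauss_sum / of_real (sqrt (real p)) * twist x * phi p a x m"
proof -
  have "(\<Sum>l<p. coeff x (mul_neg_c l) * chirp l m) = twist x * (\<Sum>l<p. coeff x l * chirp l m)"
    by (simp add: coeff_mul_neg_c sum_distrib_left mult.assoc)
  then show ?thesis
    unfolding phi_eq_chirp_combination DFT_chirp_combination by simp
qed

end

theorem theorem3:
  fixes p a :: nat
  assumes "prime p" and "p mod 4 = 1"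
    and "a < p" and "residue_primroot p a"
  shows "(\<forall>x<p. \<forall>y<p. inner_Fp p (phi p a x) (phi p a y) = (if x = y then 1 else 0))
       \<and> (\<forall>f :: nat \<Rightarrow> complex. \<exists>c :: nat \<Rightarrow> complex.
             \<forall>n<p. f n = (\<Sum>x<p. c x * phi p a x n))
       \<and> (\<forall>x<p. (\<exists>n<p. phi p a x n \<noteq> 0) \<and>
             (\<exists>ev::complex. \<forall>m<p. DFT p (phi p a x) m = ev * phi p a x m))"
proof -
  interpret phi_basis p a "int (a ^ ((p - 1) div 4) mod p)" "inv2 p"
    using assms by unfold_locales auto
  have nonzero: "\<exists>n<p. phi p a x n \<noteq> 0" if "x < p" for x
  proof (rule ccontr)
    assume "\<not> (\<exists>n<p. phi p a x n \<noteq> 0)"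
    then have "inner_Fp p (phi p a x) (phi p a x) = 0" by (simp add: inner_Fp_def)
    with phi_orthonormal[OF that that] show False by simp
  qed
  have expansion: "\<exists>c. \<forall>n<p. f n = (\<Sum>x<p. c x * phi p a x n)" for f :: "nat \<Rightarrow> complex"
  proof (intro exI allI impI)
    fix n assume "n < p"
    then show "f n = (\<Sum>x<p. inner_Fp p f (phi p a x) * phi p a x n)"
      by (intro orthonormal_expansion phi_orthonormal)
  qed
  have eigenvector: "\<exists>ev. \<forall>m<p. DFT p (phi p a x) m = ev * phi p a x m" for x
    using DFT_phi by blast
  show ?thesis
    using phi_orthonormal nonzero expansion eigenvector by blast
qed

end
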